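(* Let $M$ be a free $\mathbb{T}$-module with a finite $\mathbb{T}$-basis, $V$ its associated complex vector space, and $(\cdot,\cdot)$ a bicomplex scalar product on $M$ which is hyperbolic positive and closed on $V$. Then for all $\widehat X,\widehat Y\in M$, $$(\widehat X,\widehat Y)=\mathbf{e_1}(\widehat X_{\mathbf{e_1}},\widehat Y_{\mathbf{e_1}})+\mathbf{e_2}(\widehat X_{\mathbf{e_2}},\widehat Y_{\mathbf{e_2}})$$ and $P_k\big((\widehat X,\widehat Y)\big)=(\widehat X_{\mathbf{e_k}},\widehat Y_{\mathbf{e_k}})\in\mathbb{C}(\mathbf{i_1})$ for $k=1,2$.
   Context: Bicomplex numbers: $\mathbb{T}=\{z_1+z_2\mathbf{i_2}: z_1,z_2\in\mathbb{C}(\mathbf{i_1})\}$, $\mathbb{C}(\mathbf{i_1})=\{x+y\mathbf{i_1}: x,y\in\mathbb{R}\}$, $\mathbf{i_1}^2=\mathbf{i_2}^2=-1$, $\mathbf{i_1}\mathbf{i_2}=\mathbf{i_2}\mathbf{i_1}=\mathbf{j}$, $\mathbf{j}^2=1$ (commutative). Hyperbolic numbers $\mathbb{D}=\{x+y\mathbf{j}:x,y\in\mathbb{R}\}$. Idempotents $\mathbf{e_1}=(1+\mathbf{j})/2$, $\mathbf{e_2}=(1-\mathbf{j})/2$. Every $w=z_1+z_2\mathbf{i_2}$ is uniquely $w=(z_1-z_2\mathbf{i_1})\mathbf{e_1}+(z_1+z_2\mathbf{i_1})\mathbf{e_2}$; set $P_1(w)=z_1-z_2\mathbf{i_1}$,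 $P_2(w)=z_1+z_2\mathbf{i_1}$. Conjugation: $(z_1+z_2\mathbf{i_2})^{\dagger_3}=\overline{z_1}-\overline{z_2}\mathbf{i_2}$. $\mathbb{D}^+=\{a\mathbf{e_1}+b\mathbf{e_2}: a,b\ge 0\}$. $M$ has $\mathbb{T}$-basis $\{\widehat m_1,\dots,\widehat m_n\}$, $V=\{\sum x_l\widehat m_l: x_l\in\mathbb{C}(\mathbf{i_1})\}$; for $\widehat X=\sum x_l\widehat m_l$ with $x_l=x_{1l}\mathbf{e_1}+x_{2l}\mathbf{e_2}$, $x_{kl}\in\mathbb{C}(\mathbf{i_1})$, put $\widehat X_{\mathbf{e_k}}=\sum_l x_{kl}\widehat m_l\in V$. A bicomplex scalar product is a map $(\cdot,\cdot):M\times M\to\mathbb{T}$ with: $(\widehat X,\widehat Y_1+\widehat Y_2)=(\widehat X,\widehat Y_1)+(\widehat X,\widehat Y_2)$; $(\widehat X,\alpha\widehat Y)=\alpha(\widehat X,\widehat Y)$ for $\alpha\in\mathbb{T}$; $(\widehat X,\widehat Y)=(\widehat Y,\widehat X)^{\dagger_3}$; $(\widehat X,\widehat X)=0\iff\widehat X=0$. Hyperbolic positive: $(\widehat X,\widehat X)\in\mathbb{D}^+$ for all $\widehat X\in M$. Closed on $V$: $(\widehat X,\widehat Y)\in\mathbb{C}(\mathbf{i_1})$ for all $\widehat X,\widehat Y\in V$. *)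

theory Defs
  imports Complex_Main
begin

text \<open>Bicomplex numbers: BC z1 z2 represents z1 + z2 i2 with z1, z2 in C(i1),
  where C(i1) is modelled by the type complex (its imaginary unit being i1).\<close>

datatype bicomplex = BC (bc1: complex) (bc2: complex)

instantiation bicomplex :: comm_ring_1
begin
definition "0 = BC 0 0"
definition "1 = BC 1 0"
definition "x + y = BC (bc1 x + bc1 y) (bc2 x + bc2 y)"
definition "x - y = BC (bc1 x - bc1 y) (bc2 x - bc2 y)"
definition "- x = BC (- bc1 x) (- bc2 x)"
definition "x * y = BC (bc1 x * bc1 y - bc2 x * bc2 y) (bc1 x * bc2 y + bc2 x * bc1 y)"
instance
  by standard (auto simp: zero_bicomplex_def one_bicomplex_def plus_bicomplex_def
      minus_bicomplex_def uminus_bicomplex_def times_bicomplex_def algebra_simps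
      intro!: bicomplex.expand)
end

definition bc_of_complex :: "complex \<Rightarrow> bicomplex" where
  "bc_of_complex z = BC z 0"

definition Ci1 :: "bicomplex set" where
  "Ci1 = range bc_of_complex"

definition bc_i2 :: bicomplex where "bc_i2 = BC 0 1"
definition bc_j :: bicomplex where "bc_j = BC 0 \<i>"   \<comment> \<open>j = i1 i2\<close>

definition bc_e1 :: bicomplex where "bc_e1 = BC (1/2) (\<i>/2)"    \<comment> \<open>(1 + j)/2\<close>
definition bc_e2 :: bicomplex where "bc_e2 = BC (1/2) (-\<i>/2)"   \<comment> \<open>(1 - j)/2\<close>

text \<open>Idempotent projections: w = P1(w) e1 + P2(w) e2.\<close>
definition bc_P :: "nat \<Rightarrow> bicomplex \<Rightarrow> complex" where
  "bc_P k w = (if k = 1 then bc1 w - bc2 w * \<i> else bc1 w + bc2 w * \<i>)"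

definition bc_cnj3 :: "bicomplex \<Rightarrow> bicomplex" where
  "bc_cnj3 w = BC (cnj (bc1 w)) (- cnj (bc2 w))"

definition Dplus :: "bicomplex set" where
  "Dplus = {bc_of_complex (complex_of_real a) * bc_e1 + bc_of_complex (complex_of_real b) * bc_e2
            | a b. a \<ge> 0 \<and> b \<ge> 0}"

text \<open>The free T-module M with finite basis m_l (l ranging over the finite type 'n) is
  represented by coordinates: X = sum_l X(l) m_l.  V consists of the elements whose
  coordinates all lie in C(i1).\<close>

definition in_V :: "('n::finite \<Rightarrow> bicomplex) \<Rightarrow> bool" where
  "in_V X \<longleftrightarrow> (\<forall>l. X l \<in> Ci1)"

definition comp_e :: "nat \<Rightarrow> ('n::finite \<Rightarrow> bicomplex) \<Rightarrow> ('n \<Rightarrow> bicomplex)" where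
  "comp_e k X = (\<lambda>l. bc_of_complex (bc_P k (X l)))"

definition bicomplex_scalar_product ::
  "(('n::finite \<Rightarrow> bicomplex) \<Rightarrow> ('n \<Rightarrow> bicomplex) \<Rightarrow> bicomplex) \<Rightarrow> bool" where
  "bicomplex_scalar_product sp \<longleftrightarrow>
     (\<forall>X Y1 Y2. sp X (\<lambda>l. Y1 l + Y2 l) = sp X Y1 + sp X Y2) \<and>
     (\<forall>X Y \<alpha>. sp X (\<lambda>l. \<alpha> * Y l) = \<alpha> * sp X Y) \<and>
     (\<forall>X Y. sp X Y = bc_cnj3 (sp Y X)) \<and>
     (\<forall>X. sp X X = 0 \<longleftrightarrow> X = (\<lambda>l. 0))"

definition hyperbolic_positive ::
  "(('n::finite \<Rightarrow> bicomplex) \<Rightarrow> ('n \<Rightarrow> bicomplex) \<Rightarrow> bicomplex) \<Rightarrow> bool" where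
  "hyperbolic_positive sp \<longleftrightarrow> (\<forall>X. sp X X \<in> Dplus)"

definition closed_on_V ::
  "(('n::finite \<Rightarrow> bicomplex) \<Rightarrow> ('n \<Rightarrow> bicomplex) \<Rightarrow> bicomplex) \<Rightarrow> bool" where
  "closed_on_V sp \<longleftrightarrow> (\<forall>X Y. in_V X \<longrightarrow> in_V Y \<longrightarrow> sp X Y \<in> Ci1)"

end

theory Submission
  imports Defs
begin

text \<open>Write X = e1 X_e1 + e2 X_e2 and Y likewise. Since the dagger_3 conjugation fixes the
  idempotents, sesquilinearity expands (X, Y) into four terms with coefficients e_k e_l, and
  e1 e2 = 0 kills the mixed ones, leaving e1 (X_e1, Y_e1) + e2 (X_e2, Y_e2). Closedness on V
  makes both remaining values lie in C(i1), so by uniqueness of the idempotent decomposition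
  they are the projections P1 and P2 of (X, Y).\<close>

lemmas bicomplex_defs = zero_bicomplex_def one_bicomplex_def plus_bicomplex_def
  minus_bicomplex_def uminus_bicomplex_def times_bicomplex_def
  bc_cnj3_def bc_e1_def bc_e2_def bc_of_complex_def bc_P_def

lemma bc_cnj3_add: "bc_cnj3 (a + b) = bc_cnj3 a + bc_cnj3 b"
  by (auto simp: bicomplex_defs intro!: bicomplex.expand)

lemma bc_cnj3_mult: "bc_cnj3 (a * b) = bc_cnj3 a * bc_cnj3 b"
  by (auto simp: bicomplex_defs intro!: bicomplex.expand)

lemma bc_cnj3_cnj3 [simp]: "bc_cnj3 (bc_cnj3 a) = a"
  by (auto simp: bicomplex_defs intro!: bicomplex.expand)

lemma bc_cnj3_e1 [simp]: "bc_cnj3 bc_e1 = bc_e1"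
  and bc_cnj3_e2 [simp]: "bc_cnj3 bc_e2 = bc_e2"
  by (auto simp: bicomplex_defs intro!: bicomplex.expand)

lemma bc_e1_idem: "bc_e1 * bc_e1 = bc_e1"
  and bc_e2_idem: "bc_e2 * bc_e2 = bc_e2"
  and bc_e1_e2_orth: "bc_e1 * bc_e2 = 0"
  by (auto simp: bicomplex_defs field_simps intro!: bicomplex.expand)

lemma bc_idempotent_decomp:
  "bc_e1 * bc_of_complex (bc_P 1 w) + bc_e2 * bc_of_complex (bc_P 2 w) = w"
  by (auto simp: bicomplex_defs field_simps intro!: bicomplex.expand)

lemma bc_P_idempotent_combination:
  "bc_P 1 (bc_e1 * bc_of_complex a + bc_e2 * bc_of_complex b) = a"
  "bc_P 2 (bc_e1 * bc_of_complex a + bc_e2 * bc_of_complex b) = b"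
  by (auto simp: bicomplex_defs field_simps)

lemma comp_e_decomp: "(\<lambda>l. bc_e1 * comp_e 1 X l + bc_e2 * comp_e 2 X l) = X"
  unfolding comp_e_def bc_idempotent_decomp ..

lemma in_V_comp_e: "in_V (comp_e k X)"
  by (auto simp: in_V_def comp_e_def Ci1_def)

lemma bicomplex_scalar_product_linear_right:
  assumes "bicomplex_scalar_product sp"
  shows "sp Z (\<lambda>l. a * U l + b * W l) = a * sp Z U + b * sp Z W"
proof -
  have add: "sp X (\<lambda>l. Y1 l + Y2 l) = sp X Y1 + sp X Y2"
    and hom: "sp X (\<lambda>l. \<alpha> * Y l) = \<alpha> * sp X Y" for X Y Y1 Y2 \<alpha>
    using assms unfolding bicomplex_scalar_product_def by blast+
  show ?thesis
    using add[of Z "\<lambda>l. a * U l" "\<lambda>l. b * W l"] by (simp add: hom)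
qed

lemma bicomplex_scalar_product_antilinear_left:
  assumes "bicomplex_scalar_product sp"
  shows "sp (\<lambda>l. a * U l + b * W l) Z = bc_cnj3 a * sp U Z + bc_cnj3 b * sp W Z"
proof -
  have sym: "sp X Y = bc_cnj3 (sp Y X)" for X Y
    using assms unfolding bicomplex_scalar_product_def by blast
  have "sp (\<lambda>l. a * U l + b * W l) Z = bc_cnj3 (a * sp Z U + b * sp Z W)"
    by (simp add: sym[of _ Z] bicomplex_scalar_product_linear_right[OF assms])
  then show ?thesis
    by (simp add: bc_cnj3_add bc_cnj3_mult sym[of U Z] sym[of W Z])
qed

lemma bicomplex_scalar_product_idempotent_split:
  assumes "bicomplex_scalar_product sp"
  shows "sp X Y = bc_e1 * sp (comp_e 1 X) (comp_e 1 Y) + bc_e2 * sp (comp_e 2 X) (comp_e 2 Y)"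
proof -
  define X1 X2 Y1 Y2 where "X1 = comp_e 1 X" "X2 = comp_e 2 X" "Y1 = comp_e 1 Y" "Y2 = comp_e 2 Y"
  have "sp X Y = sp (\<lambda>l. bc_e1 * X1 l + bc_e2 * X2 l) (\<lambda>l. bc_e1 * Y1 l + bc_e2 * Y2 l)"
    unfolding X1_X2_Y1_Y2_def comp_e_decomp ..
  also have "\<dots> = bc_e1 * (bc_e1 * sp X1 Y1 + bc_e2 * sp X1 Y2)
      + bc_e2 * (bc_e1 * sp X2 Y1 + bc_e2 * sp X2 Y2)"
    by (simp add: bicomplex_scalar_product_antilinear_left[OF assms]
        bicomplex_scalar_product_linear_right[OF assms])
  also have "\<dots> = bc_e1 * sp X1 Y1 + bc_e2 * sp X2 Y2"
    by (simp add: algebra_simps bc_e1_idem bc_e2_idem bc_e1_e2_orth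
        mult.assoc[symmetric] mult.commute[of bc_e2 bc_e1])
  finally show ?thesis
    unfolding X1_X2_Y1_Y2_def .
qed

theorem mainTheorem6:
  fixes sp :: "('n::finite \<Rightarrow> bicomplex) \<Rightarrow> ('n \<Rightarrow> bicomplex) \<Rightarrow> bicomplex"
  assumes "bicomplex_scalar_product sp"
    and "hyperbolic_positive sp"
    and "closed_on_V sp"
  shows "\<forall>X Y. sp X Y = bc_e1 * sp (comp_e 1 X) (comp_e 1 Y) + bc_e2 * sp (comp_e 2 X) (comp_e 2 Y)
           \<and> (\<forall>k\<in>{1,2}. bc_of_complex (bc_P k (sp X Y)) = sp (comp_e k X) (comp_e k Y)
                         \<and> sp (comp_e k X) (comp_e k Y) \<in> Ci1)"
proof (intro allI)
  fix X Y :: "'n \<Rightarrow> bicomplex"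
  have split: "sp X Y = bc_e1 * sp (comp_e 1 X) (comp_e 1 Y) + bc_e2 * sp (comp_e 2 X) (comp_e 2 Y)"
    using bicomplex_scalar_product_idempotent_split[OF assms(1)] .
  have closed: "sp (comp_e k X) (comp_e k Y) \<in> Ci1" for k
    using assms(3) in_V_comp_e unfolding closed_on_V_def by blast
  then obtain a b where a: "sp (comp_e 1 X) (comp_e 1 Y) = bc_of_complex a"
    and b: "sp (comp_e 2 X) (comp_e 2 Y) = bc_of_complex b"
    unfolding Ci1_def by blast
  show "sp X Y = bc_e1 * sp (comp_e 1 X) (comp_e 1 Y) + bc_e2 * sp (comp_e 2 X) (comp_e 2 Y)
      \<and> (\<forall>k\<in>{1,2}. bc_of_complex (bc_P k (sp X Y)) = sp (comp_e k X) (comp_e k Y)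
                    \<and> sp (comp_e k X) (comp_e k Y) \<in> Ci1)"
    using split closed a b bc_P_idempotent_combination[of a b] by auto
qed

end
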